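(* Let $n\ge 2$ and let $A_1,\dots,A_{2^n}$ be the vertices $(\pm\tfrac12,\dots,\pm\tfrac12)$ of a cube in $\mathbb R^n$ centred at the origin $O$. Let $\Gamma$ be the sphere of radius $r>0$ centred at $O$, let $D=\{\tfrac{r}{\sqrt n}(\varepsilon_1,\dots,\varepsilon_n):\varepsilon_j\in\{1,-1\}\}$ (the points where the rays $OA_i$ meet $\Gamma$) and $E=\{\pm r\mathbf e_i:1\le i\le n\}$ (the points where the perpendiculars from $O$ to the facets of the cube meet $\Gamma$), where $\mathbf e_1,\dots,\mathbf e_n$ is the standard basis. Fix $h\ge0$ and put $H_n(M,\lambda)=\sum_{i=1}^{2^n}(|MA_i|^2+h)^{\lambda/2}$ for $M\in\Gamma$. Then: (1) If $\lambda<0$: the minimum of $H_n(\cdot,\lambda)$ on $\Gamma$ is attained precisely at the points of $E$, and, unless $h=0$ and $\Gamma$ is the circumscribed sphere of the cube (i.e. $r=\sqrt n/2$, in which case $H_n(\cdot,\lambda)$ is unbounded), the maximum is attained precisely at the points of $D$. (2) If $\lambda\in\{0,2,4,6\}$, $H_n(M,\lambda)$ is independent of $M\in\Gamma$; these are the only real $\lambda$ with this property. If $\lambda\in(0,2)\cup(4,6)$, the maximum is attained precisely at the points of $E$ and the minimum precisely at the points of $D$. If $\lambda\in(2,4)$, the minimum is attained precisely at the points of $E$ and the maximum precisely at the points of $D$. (3) If $\lambda>6$: the maximum is attained precisely at the points of $D$ and the minimum precisely at the points of $E$.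
   Context: $|MA|$ denotes Euclidean distance. *)

theory Defs
  imports "HOL-Analysis.Analysis"
begin

definition cube_vertices :: "(real^'n) set" where
  "cube_vertices = {x. \<forall>i. x $ i = 1/2 \<or> x $ i = -(1/2)}"

definition diag_points :: "real \<Rightarrow> (real^'n) set" where
  "diag_points r = {x. \<forall>i. x $ i = r / sqrt (real CARD('n)) \<or> x $ i = - (r / sqrt (real CARD('n)))}"

definition axis_points :: "real \<Rightarrow> (real^'n) set" where
  "axis_points r = {x. \<exists>i. x = r *\<^sub>R axis i 1 \<or> x = - (r *\<^sub>R axis i 1)}"

text \<open>Real power t^a for t \<ge> 0, with the convention 0^0 = 1 (Isabelle's powr has 0 powr 0 = 0).\<close>
definition rpow :: "real \<Rightarrow> real \<Rightarrow> real" where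
  "rpow t a = (if t = 0 \<and> a = 0 then 1 else t powr a)"

definition Hn :: "real \<Rightarrow> real \<Rightarrow> real^'n \<Rightarrow> real" where
  "Hn h lam M = (\<Sum>A\<in>(cube_vertices::(real^'n) set). rpow ((dist M A)\<^sup>2 + h) (lam / 2))"

definition min_points :: "'a set \<Rightarrow> ('a \<Rightarrow> real) \<Rightarrow> 'a set" where
  "min_points S f = {M\<in>S. \<forall>N\<in>S. f M \<le> f N}"

definition max_points :: "'a set \<Rightarrow> ('a \<Rightarrow> real) \<Rightarrow> 'a set" where
  "max_points S f = {M\<in>S. \<forall>N\<in>S. f N \<le> f M}"

end

theory Submission
  imports Defs
begin

text \<open>Fix two coordinates \<open>i \<noteq> j\<close> and let \<open>M\<close> move on the sphere while \<open>M$i\<^sup>2 + M$j\<^sup>2\<close> and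
  the other coordinates stay fixed. Grouping the vertices into quadruples that differ only in the
  coordinates \<open>i\<close>, \<open>j\<close> turns \<open>Hn\<close> into a sum of terms \<open>g (q \<plusminus> M$i \<plusminus> M$j)\<close> with
  \<open>g w = w powr (lam/2)\<close>, and such a four-point sum is strictly monotone in \<open>\<bar>M$i * M$j\<bar>\<close>
  whenever the fourth derivative of \<open>g\<close> has constant sign, namely that of
  \<open>p (p - 1) (p - 2) (p - 3)\<close> for \<open>p = lam/2\<close>; for \<open>lam \<in> {2, 4, 6}\<close> it is constant because \<open>g\<close> is
  a polynomial of degree at most 3. Rotating one coordinate into another makes \<open>\<bar>M$i * M$j\<bar>\<close>
  vanish and leads from any point to an axis point in finitely many strict steps. Equalising two
  coordinates of different modulus increases \<open>\<bar>M$i * M$j\<bar>\<close>, so an extremum in the opposite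
  direction, which exists by compactness, must lie on a diagonal.\<close>

section \<open>Four-point sums\<close>

lemma slope_from_origin_strict_mono:
  fixes \<phi> \<phi>' \<phi>'' :: "real \<Rightarrow> real"
  assumes zero: "\<phi> 0 = 0"
    and d1: "\<And>x. 0 \<le> x \<Longrightarrow> x < X \<Longrightarrow> (\<phi> has_real_derivative \<phi>' x) (at x)"
    and d2: "\<And>x. 0 \<le> x \<Longrightarrow> x < X \<Longrightarrow> (\<phi>' has_real_derivative \<phi>'' x) (at x)"
    and pos: "\<And>x. 0 < x \<Longrightarrow> x < X \<Longrightarrow> \<phi>'' x > 0"
    and xy: "0 < x" "x < y" "y < X"
  shows "\<phi> x / x < \<phi> y / y"
proof -
  define H where "H x = x * \<phi>' x - \<phi> x" for x
  have dH: "(H has_real_derivative x * \<phi>'' x) (at x)" if "0 \<le> x" "x < X" for x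
  proof -
    have "(H has_real_derivative (x * \<phi>'' x + 1 * \<phi>' x) - \<phi>' x) (at x)"
      unfolding H_def by (intro DERIV_diff DERIV_mult' DERIV_ident d1 d2 that)
    thus ?thesis by simp
  qed
  have H_pos: "H z > 0" if "0 < z" "z < X" for z
  proof -
    have "H 0 < H z"
    proof (rule DERIV_pos_imp_increasing_open[OF that(1)])
      show "\<exists>w. DERIV H t :> w \<and> w > 0" if "0 < t" "t < z" for t
        using that \<open>z < X\<close> by (intro exI[of _ "t * \<phi>'' t"]) (use pos in \<open>auto intro!: dH\<close>)
      show "continuous_on {0..z} H" using that
        by (intro continuous_at_imp_continuous_on ballI DERIV_isCont[OF dH]) auto
    qed
    thus ?thesis by (simp add: H_def zero)
  qed
  have dQ: "((\<lambda>x. \<phi> x / x) has_real_derivative H z / z\<^sup>2) (at z)" if "0 < z" "z < X" for z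
    using DERIV_quotient[OF d1 DERIV_ident, of z] that
    by (simp add: H_def power2_eq_square algebra_simps)
  show ?thesis
  proof (rule DERIV_pos_imp_increasing_open[OF xy(2)])
    show "\<exists>w. DERIV (\<lambda>x. \<phi> x / x) z :> w \<and> w > 0" if "x < z" "z < y" for z
      using that xy by (intro exI[of _ "H z / z\<^sup>2"]) (use H_pos in \<open>auto intro!: dQ\<close>)
    show "continuous_on {x..y} (\<lambda>x. \<phi> x / x)" using xy
      by (intro continuous_at_imp_continuous_on ballI DERIV_isCont[OF dQ]) auto
  qed
qed

lemma symmetric_sum_strict_mono:
  fixes K K' :: "real \<Rightarrow> real"
  assumes cont: "continuous_on {0..Y} K"
    and deriv: "\<And>y. 0 < y \<Longrightarrow> y < Y \<Longrightarrow> (K has_real_derivative K' y) (at y)"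
    and mono: "\<And>x y. 0 < x \<Longrightarrow> x < y \<Longrightarrow> y < Y \<Longrightarrow> K' x < K' y"
    and d: "0 \<le> d1" "d1 < d2" "d2 \<le> W" "W + d2 \<le> Y"
  shows "K (W - d1) + K (W + d1) < K (W - d2) + K (W + d2)"
proof (rule DERIV_pos_imp_increasing_open[OF d(2)])
  fix t assume t: "d1 < t" "t < d2"
  have "((\<lambda>d. K (W - d) + K (W + d)) has_real_derivative K' (W - t) * (0 - 1) + K' (W + t) * (0 + 1)) (at t)"
    using t d by (intro derivative_intros DERIV_chain2[OF deriv]) auto
  moreover have "K' (W - t) < K' (W + t)" using t d by (intro mono) auto
  ultimately show "\<exists>y. DERIV (\<lambda>d. K (W - d) + K (W + d)) t :> y \<and> y > 0" by (intro exI) auto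
next
  show "continuous_on {d1..d2} (\<lambda>d. K (W - d) + K (W + d))" using d
    by (intro continuous_on_add continuous_on_compose2[OF cont]) (auto intro!: continuous_intros)
qed

definition four_point_sum :: "(real \<Rightarrow> real) \<Rightarrow> real \<Rightarrow> real \<Rightarrow> real \<Rightarrow> real" where
  "four_point_sum g q a b = g (q - a - b) + g (q - a + b) + g (q + a - b) + g (q + a + b)"

lemma four_point_sum_sqrt_form:
  "four_point_sum g q a b =
    (g (q - sqrt (a\<^sup>2 + b\<^sup>2 - 2 * \<bar>a * b\<bar>)) + g (q + sqrt (a\<^sup>2 + b\<^sup>2 - 2 * \<bar>a * b\<bar>))) +
    (g (q - sqrt (a\<^sup>2 + b\<^sup>2 + 2 * \<bar>a * b\<bar>)) + g (q + sqrt (a\<^sup>2 + b\<^sup>2 + 2 * \<bar>a * b\<bar>)))"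
proof -
  have "a\<^sup>2 + b\<^sup>2 - 2 * \<bar>a * b\<bar> = (\<bar>a\<bar> - \<bar>b\<bar>)\<^sup>2" "a\<^sup>2 + b\<^sup>2 + 2 * \<bar>a * b\<bar> = (\<bar>a\<bar> + \<bar>b\<bar>)\<^sup>2"
    by (simp_all add: power2_eq_square abs_mult algebra_simps)
  thus ?thesis unfolding four_point_sum_def
    by (cases "a \<ge> 0"; cases "b \<ge> 0"; cases "\<bar>a\<bar> \<ge> \<bar>b\<bar>") (simp_all add: abs_if algebra_simps)
qed

lemma four_point_sum_cong:
  "a\<^sup>2 + b\<^sup>2 = a'\<^sup>2 + b'\<^sup>2 \<Longrightarrow> \<bar>a * b\<bar> = \<bar>a' * b'\<bar> \<Longrightarrow> four_point_sum g q a b = four_point_sum g q a' b'"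
  unfolding four_point_sum_sqrt_form by simp

lemma reflected_sum_has_real_derivative:
  assumes f': "\<And>w. w > lo \<Longrightarrow> (f has_real_derivative f' w) (at w)" and x: "lo < q - x" "lo < q + x"
  shows "((\<lambda>x. f (q + x) + f (q - x)) has_real_derivative f' (q + x) - f' (q - x)) (at x)"
    and "((\<lambda>x. f (q + x) - f (q - x)) has_real_derivative f' (q + x) + f' (q - x)) (at x)"
proof -
  have "((\<lambda>x. f (q - x)) has_real_derivative f' (q - x) * (0 - 1)) (at x)"
    by (rule DERIV_chain2[OF f']) (use x in \<open>auto intro!: derivative_eq_intros\<close>)
  moreover have "((\<lambda>x. f (q + x)) has_real_derivative f' (q + x) * (0 + 1)) (at x)"
    by (rule DERIV_chain2[OF f']) (use x in \<open>auto intro!: derivative_eq_intros\<close>)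
  ultimately show "((\<lambda>x. f (q + x) + f (q - x)) has_real_derivative f' (q + x) - f' (q - x)) (at x)"
    and "((\<lambda>x. f (q + x) - f (q - x)) has_real_derivative f' (q + x) + f' (q - x)) (at x)"
    by (auto intro!: derivative_eq_intros)
qed

lemma sqrt_reflected_sum_has_real_derivative:
  assumes g': "\<And>w. w > lo \<Longrightarrow> (g has_real_derivative g' w) (at w)"
    and y: "0 < y" "lo < q - sqrt y"
  shows "((\<lambda>y. g (q + sqrt y) + g (q - sqrt y)) has_real_derivative
    (g' (q + sqrt y) - g' (q - sqrt y)) / sqrt y / 2) (at y)"
proof -
  have "lo < q + sqrt y" using y by (smt (verit) real_sqrt_ge_zero)
  hence "((\<lambda>y. g (q + sqrt y) + g (q - sqrt y)) has_real_derivative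
      (g' (q + sqrt y) - g' (q - sqrt y)) * (inverse (sqrt y) / 2)) (at y)"
    using y by (intro DERIV_chain2[OF reflected_sum_has_real_derivative(1)[OF g'] DERIV_real_sqrt]) auto
  thus ?thesis by (simp add: field_simps)
qed

lemma odd_part_slope_strict_mono:
  fixes g' g'' g''' g'''' :: "real \<Rightarrow> real"
  assumes d2: "\<And>w. w > lo \<Longrightarrow> (g' has_real_derivative g'' w) (at w)"
    and d3: "\<And>w. w > lo \<Longrightarrow> (g'' has_real_derivative g''' w) (at w)"
    and d4: "\<And>w. w > lo \<Longrightarrow> (g''' has_real_derivative g'''' w) (at w)"
    and pos: "\<And>w. w > lo \<Longrightarrow> g'''' w > 0"
    and xy: "0 < x" "x < y" "y < q - lo"
  shows "(g' (q + x) - g' (q - x)) / x < (g' (q + y) - g' (q - y)) / y"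
proof (rule slope_from_origin_strict_mono[where \<phi> = "\<lambda>x. g' (q + x) - g' (q - x)", OF _ _ _ _ xy])
  show "(\<lambda>x. g' (q + x) - g' (q - x)) 0 = 0" by simp
  fix z assume z: "0 \<le> z" "z < q - lo"
  show "((\<lambda>x. g' (q + x) - g' (q - x)) has_real_derivative g'' (q + z) + g'' (q - z)) (at z)"
    using z by (intro reflected_sum_has_real_derivative(2)[OF d2]) auto
  show "((\<lambda>x. g'' (q + x) + g'' (q - x)) has_real_derivative g''' (q + z) - g''' (q - z)) (at z)"
    using z by (intro reflected_sum_has_real_derivative(1)[OF d3]) auto
next
  fix z assume z: "0 < z" "z < q - lo"
  show "g''' (q + z) - g''' (q - z) > 0"
    using z by (auto intro!: DERIV_pos_imp_increasing[of "q - z" "q + z" g'''] exI[of _ "g'''' _"] d4 pos)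
qed

text \<open>The four points \<open>q \<plusminus> a \<plusminus> b\<close> are \<open>q \<plusminus> \<surd>(W - d)\<close> and \<open>q \<plusminus> \<surd>(W + d)\<close> with
  \<open>W = a\<^sup>2 + b\<^sup>2\<close>, \<open>d = 2\<bar>ab\<bar>\<close>. If \<open>g'''' > 0\<close>, then \<open>K y = g (q + \<surd>y) + g (q - \<surd>y)\<close> has
  strictly increasing derivative, so \<open>K (W - d) + K (W + d)\<close> strictly increases with \<open>d\<close>.\<close>
lemma four_point_sum_strict_mono:
  fixes g g' g'' g''' g'''' :: "real \<Rightarrow> real"
  assumes d1: "\<And>w. w > lo \<Longrightarrow> (g has_real_derivative g' w) (at w)"
    and d2: "\<And>w. w > lo \<Longrightarrow> (g' has_real_derivative g'' w) (at w)"
    and d3: "\<And>w. w > lo \<Longrightarrow> (g'' has_real_derivative g''' w) (at w)"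
    and d4: "\<And>w. w > lo \<Longrightarrow> (g''' has_real_derivative g'''' w) (at w)"
    and pos: "\<And>w. w > lo \<Longrightarrow> g'''' w > 0"
    and cont: "continuous_on {lo..} g"
    and W: "a\<^sup>2 + b\<^sup>2 = a'\<^sup>2 + b'\<^sup>2" and prod: "\<bar>a * b\<bar> < \<bar>a' * b'\<bar>"
    and lo: "lo \<le> q - \<bar>a'\<bar> - \<bar>b'\<bar>"
  shows "four_point_sum g q a b < four_point_sum g q a' b'"
proof -
  define X where "X = q - lo"
  have "a' \<noteq> 0" using prod by auto
  hence X: "\<bar>a'\<bar> + \<bar>b'\<bar> \<le> X" "X > 0" using lo X_def by auto
  define K where "K y = g (q + sqrt y) + g (q - sqrt y)" for y
  define K' where "K' y = (g' (q + sqrt y) - g' (q - sqrt y)) / sqrt y / 2" for y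
  have dK: "(K has_real_derivative K' y) (at y)" if "0 < y" "y < X\<^sup>2" for y
  proof -
    have "sqrt y < X" using that X real_sqrt_less_mono[of y "X\<^sup>2"] by auto
    thus ?thesis unfolding K_def K'_def
      using sqrt_reflected_sum_has_real_derivative[OF d1 \<open>0 < y\<close>] X_def by simp
  qed
  have K'_mono: "K' x < K' y" if "0 < x" "x < y" "y < X\<^sup>2" for x y
  proof -
    have "(g' (q + sqrt x) - g' (q - sqrt x)) / sqrt x < (g' (q + sqrt y) - g' (q - sqrt y)) / sqrt y"
      by (rule odd_part_slope_strict_mono[OF d2 d3 d4 pos])
        (use that X X_def real_sqrt_less_mono[of y "X\<^sup>2"] in auto)
    thus ?thesis by (simp add: K'_def)
  qed
  have K_cont: "continuous_on {0..X\<^sup>2} K"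
  proof -
    have "lo \<le> q + sqrt y \<and> lo \<le> q - sqrt y" if "0 \<le> y" "y \<le> X\<^sup>2" for y
    proof -
      have "0 \<le> sqrt y" "sqrt y \<le> X" using that X real_sqrt_le_mono[of y "X\<^sup>2"] by auto
      thus ?thesis using X_def by linarith
    qed
    thus ?thesis unfolding K_def
      by (intro continuous_on_add continuous_on_compose2[OF cont]) (auto intro!: continuous_intros)
  qed
  have "K (a\<^sup>2 + b\<^sup>2 - 2 * \<bar>a * b\<bar>) + K (a\<^sup>2 + b\<^sup>2 + 2 * \<bar>a * b\<bar>)
      < K (a\<^sup>2 + b\<^sup>2 - 2 * \<bar>a' * b'\<bar>) + K (a\<^sup>2 + b\<^sup>2 + 2 * \<bar>a' * b'\<bar>)"
  proof (rule symmetric_sum_strict_mono[OF K_cont dK K'_mono])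
    have "0 \<le> (\<bar>a'\<bar> - \<bar>b'\<bar>)\<^sup>2" by simp
    thus "2 * \<bar>a' * b'\<bar> \<le> a\<^sup>2 + b\<^sup>2" unfolding W by (simp add: power2_eq_square abs_mult algebra_simps)
    have "(\<bar>a'\<bar> + \<bar>b'\<bar>)\<^sup>2 \<le> X\<^sup>2" using X by (intro power_mono) auto
    thus "a\<^sup>2 + b\<^sup>2 + 2 * \<bar>a' * b'\<bar> \<le> X\<^sup>2" unfolding W by (simp add: power2_eq_square abs_mult algebra_simps)
  qed (use prod in auto)
  thus ?thesis unfolding four_point_sum_sqrt_form[of g] W K_def by (simp add: add_ac)
qed

text \<open>The fourth derivative of \<open>w powr p\<close> is \<open>falling4 p * w powr (p - 4)\<close>.\<close>
definition falling4 :: "real \<Rightarrow> real" where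
  "falling4 p = p * (p - 1) * (p - 2) * (p - 3)"

lemma scaled_powr_has_real_derivative:
  "w > 0 \<Longrightarrow> ((\<lambda>w. c * w powr e) has_real_derivative (c * e) * w powr (e - 1)) (at w)"
  using DERIV_cmult[OF has_real_derivative_powr[of w e], of c] by (simp add: mult.assoc)

lemma four_point_sum_powr_strict_mono:
  fixes p \<sigma> :: real
  assumes sign: "\<sigma> * falling4 p > 0"
    and W: "a\<^sup>2 + b\<^sup>2 = a'\<^sup>2 + b'\<^sup>2" and prod: "\<bar>a * b\<bar> < \<bar>a' * b'\<bar>"
    and nonneg: "0 \<le> q - \<bar>a'\<bar> - \<bar>b'\<bar>" and pos: "0 < p \<or> 0 < q - \<bar>a'\<bar> - \<bar>b'\<bar>"
  shows "\<sigma> * four_point_sum (\<lambda>w. w powr p) q a b < \<sigma> * four_point_sum (\<lambda>w. w powr p) q a' b'"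
proof -
  define lo where "lo = q - \<bar>a'\<bar> - \<bar>b'\<bar>"
  define c where "c k = \<sigma> * (\<Prod>i<k. p - real i)" for k
  have c_Suc: "c (Suc k) = c k * (p - real k)" for k by (simp add: c_def)
  have deriv: "((\<lambda>w. c k * w powr (p - real k)) has_real_derivative
      c (Suc k) * w powr (p - real (Suc k))) (at w)" if "w > lo" for k w
    using scaled_powr_has_real_derivative[of w "c k" "p - real k"] that nonneg
    by (simp add: lo_def c_Suc algebra_simps)
  have "four_point_sum (\<lambda>w. c 0 * w powr (p - real 0)) q a b
      < four_point_sum (\<lambda>w. c 0 * w powr (p - real 0)) q a' b'"
  proof (rule four_point_sum_strict_mono[OF deriv deriv deriv deriv _ _ W prod])
    have "c (Suc (Suc (Suc (Suc 0)))) = \<sigma> * falling4 p"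
      by (simp add: c_def falling4_def algebra_simps)
    thus "c (Suc (Suc (Suc (Suc 0)))) * w powr (p - real (Suc (Suc (Suc (Suc 0))))) > 0"
      if "w > lo" for w using sign that nonneg lo_def by simp
    show "continuous_on {lo..} (\<lambda>w. c 0 * w powr (p - real 0))"
      using pos nonneg by (intro continuous_intros continuous_on_powr') (auto simp: lo_def)
    show "lo \<le> q - \<bar>a'\<bar> - \<bar>b'\<bar>" by (simp add: lo_def)
  qed
  moreover have "four_point_sum (\<lambda>w. c 0 * w powr (p - real 0)) q x y =
      \<sigma> * four_point_sum (\<lambda>w. w powr p) q x y" for x y
    by (simp add: four_point_sum_def c_def algebra_simps)
  ultimately show ?thesis by simp
qed

lemma four_point_sum_power_cong:
  fixes k :: nat
  assumes k: "k \<le> 3" and W: "a\<^sup>2 + b\<^sup>2 = a'\<^sup>2 + b'\<^sup>2"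
  shows "four_point_sum (\<lambda>w. w ^ k) q a b = four_point_sum (\<lambda>w. w ^ k) q a' b'"
proof -
  have "four_point_sum (\<lambda>w. w ^ k) q x y =
      (if k = 0 then 4 else if k = 1 then 4 * q else if k = 2 then 4 * q\<^sup>2 + 4 * (x\<^sup>2 + y\<^sup>2)
       else 4 * q ^ 3 + 12 * q * (x\<^sup>2 + y\<^sup>2))" for x y
    using k unfolding four_point_sum_def
    by (auto simp: le_Suc_eq numeral_eq_Suc power2_eq_square power3_eq_cube algebra_simps)
  thus ?thesis using W by simp
qed

section \<open>Quadruples of cube vertices\<close>

definition flip_coord :: "'n \<Rightarrow> real^'n \<Rightarrow> real^'n" where
  "flip_coord i A = (\<chi> k. if k = i then - A $ k else A $ k)"

definition inner_off :: "'n \<Rightarrow> 'n \<Rightarrow> real^'n \<Rightarrow> real^'n \<Rightarrow> real" where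
  "inner_off i j x y = (\<Sum>k\<in>UNIV - {i, j}. x $ k * y $ k)"

definition pair_base_vertices :: "'n \<Rightarrow> 'n \<Rightarrow> (real^'n) set" where
  "pair_base_vertices i j = {A \<in> cube_vertices. A $ i = 1/2 \<and> A $ j = 1/2}"

lemma flip_coord_nth: "flip_coord i A $ k = (if k = i then - A $ k else A $ k)"
  by (simp add: flip_coord_def)

lemma flip_coord_flip_coord [simp]: "flip_coord i (flip_coord i A) = A"
  by (simp add: vec_eq_iff flip_coord_nth)

lemma flip_coord_commute: "flip_coord i (flip_coord j A) = flip_coord j (flip_coord i A)"
  by (simp add: vec_eq_iff flip_coord_nth)

lemma flip_coord_cube_vertices: "A \<in> cube_vertices \<Longrightarrow> flip_coord i A \<in> cube_vertices"
  by (auto simp: cube_vertices_def flip_coord_nth)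

lemma cube_vertex_nth: "A \<in> cube_vertices \<Longrightarrow> A $ i = 1/2 \<or> A $ i = -(1/2)"
  by (simp add: cube_vertices_def)

lemma finite_cube_vertices: "finite (cube_vertices :: (real^'n) set)"
proof -
  have "cube_vertices \<subseteq> vec_lambda ` (UNIV \<rightarrow>\<^sub>E {1/2, -(1/2)} :: ('n \<Rightarrow> real) set)"
  proof
    fix x :: "real^'n" assume "x \<in> cube_vertices"
    hence "vec_nth x \<in> UNIV \<rightarrow>\<^sub>E {1/2, -(1/2)}" by (auto simp: cube_vertices_def)
    thus "x \<in> vec_lambda ` (UNIV \<rightarrow>\<^sub>E {1/2, -(1/2)})" by (metis image_eqI vec_nth_inverse)
  qed
  thus ?thesis by (rule finite_subset) (intro finite_imageI finite_PiE; simp)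
qed

lemma cube_vertex_inner_self: "A \<in> cube_vertices \<Longrightarrow> A \<bullet> A = real CARD('n) / 4"
  for A :: "real^'n"
proof -
  assume A: "A \<in> cube_vertices"
  have sq: "A $ k * A $ k = 1/4" for k
    using cube_vertex_nth[OF A, of k] by (elim disjE) (erule ssubst, simp)+
  have "A \<bullet> A = (\<Sum>k\<in>(UNIV::'n set). 1/4)"
    unfolding inner_vec_def inner_real_def by (intro sum.cong refl sq)
  thus ?thesis by simp
qed

lemma dist_cube_vertex_sq:
  fixes M A :: "real^'n"
  assumes "M \<in> sphere 0 r" "A \<in> cube_vertices"
  shows "(dist M A)\<^sup>2 + h = (r\<^sup>2 + real CARD('n) / 4 + h) - 2 * (M \<bullet> A)"
proof -
  have "(dist M A)\<^sup>2 = M \<bullet> M - 2 * (M \<bullet> A) + A \<bullet> A"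
    by (simp add: dist_norm power2_norm_eq_inner inner_diff inner_commute)
  moreover have "M \<bullet> M = r\<^sup>2" using assms by (simp flip: power2_norm_eq_inner)
  ultimately show ?thesis using cube_vertex_inner_self[OF assms(2)] by simp
qed

lemma inner_split_pair:
  fixes x y :: "real^'n"
  assumes "i \<noteq> j"
  shows "x \<bullet> y = x $ i * y $ i + x $ j * y $ j + inner_off i j x y"
proof -
  have "UNIV = insert i (insert j (UNIV - {i, j}))" by auto
  hence "x \<bullet> y = (\<Sum>k\<in>insert i (insert j (UNIV - {i, j})). x $ k * y $ k)"
    unfolding inner_vec_def inner_real_def by simp
  thus ?thesis using assms by (simp add: inner_off_def add.assoc)
qed

lemma inner_off_cong:
  "(\<And>k. k \<noteq> i \<Longrightarrow> k \<noteq> j \<Longrightarrow> x $ k = x' $ k \<and> y $ k = y' $ k) \<Longrightarrow> inner_off i j x y = inner_off i j x' y'"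
  by (auto simp: inner_off_def intro!: sum.cong)


lemma sum_flip_coord_split:
  assumes S: "finite S" "S \<subseteq> cube_vertices" "\<And>A. A \<in> S \<Longrightarrow> flip_coord i A \<in> S"
  shows "(\<Sum>A\<in>S. F A) = (\<Sum>A\<in>{A\<in>S. A $ i = 1/2}. F A + F (flip_coord i A))"
proof -
  let ?P = "{A\<in>S. A $ i = 1/2}" and ?N = "{A\<in>S. A $ i = -(1/2)}"
  have "S \<subseteq> ?P \<union> ?N" using S(2) cube_vertex_nth by blast
  hence "S = ?P \<union> ?N" by blast
  hence "sum F S = sum F (?P \<union> ?N)" by (rule arg_cong)
  also have "\<dots> = sum F ?P + sum F ?N" by (rule sum.union_disjoint) (use S(1) in auto)
  also have "?N = flip_coord i ` ?P"
  proof
    show "?N \<subseteq> flip_coord i ` ?P"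
    proof
      fix A assume A: "A \<in> ?N"
      hence "flip_coord i A \<in> ?P" using S(3) by (auto simp: flip_coord_nth)
      moreover have "A = flip_coord i (flip_coord i A)" by simp
      ultimately show "A \<in> flip_coord i ` ?P" by blast
    qed
    show "flip_coord i ` ?P \<subseteq> ?N" using S(3) by (auto simp: flip_coord_nth)
  qed
  also have "sum F (flip_coord i ` ?P) = (\<Sum>A\<in>?P. F (flip_coord i A))"
    by (subst sum.reindex) (auto intro: inj_on_inverseI[of _ "flip_coord i"])
  finally show ?thesis by (simp add: sum.distrib)
qed

lemma sum_cube_vertices_pair_split:
  assumes ij: "i \<noteq> j"
  shows "(\<Sum>A\<in>cube_vertices. F A) = (\<Sum>A\<in>pair_base_vertices i j.
    F A + F (flip_coord i A) + F (flip_coord j A) + F (flip_coord i (flip_coord j A)))"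
proof -
  let ?Vi = "{A\<in>cube_vertices. A $ i = 1/2}"
  have "(\<Sum>A\<in>cube_vertices. F A) = (\<Sum>A\<in>?Vi. F A + F (flip_coord i A))"
    by (intro sum_flip_coord_split finite_cube_vertices flip_coord_cube_vertices) auto
  also have "\<dots> = (\<Sum>A\<in>{A\<in>?Vi. A $ j = 1/2}.
      (F A + F (flip_coord i A)) + (F (flip_coord j A) + F (flip_coord i (flip_coord j A))))"
    by (subst sum_flip_coord_split[where i = j])
      (use finite_cube_vertices ij in \<open>auto simp: flip_coord_cube_vertices flip_coord_nth flip_coord_commute\<close>)
  also have "{A\<in>?Vi. A $ j = 1/2} = pair_base_vertices i j" by (auto simp: pair_base_vertices_def)
  finally show ?thesis by (simp add: add.assoc)
qed

lemma finite_pair_base_vertices: "finite (pair_base_vertices i j)"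
  using finite_cube_vertices by (rule finite_subset[rotated]) (auto simp: pair_base_vertices_def)

lemma pair_base_vertices_nonempty: "pair_base_vertices i j \<noteq> {}"
proof -
  have "(\<chi> k. 1/2) \<in> pair_base_vertices i j" by (simp add: pair_base_vertices_def cube_vertices_def)
  thus ?thesis by blast
qed

text \<open>For \<open>M\<close> on the sphere, the values \<open>(dist M B)\<^sup>2 + h\<close> at the four vertices \<open>B\<close> obtained from
  \<open>A \<in> pair_base_vertices i j\<close> by flipping the coordinates \<open>i\<close>, \<open>j\<close> are \<open>q \<plusminus> M$i \<plusminus> M$j\<close> with
  \<open>q = pair_offset r h i j M A\<close>.\<close>
definition pair_offset :: "real \<Rightarrow> real \<Rightarrow> 'n \<Rightarrow> 'n \<Rightarrow> real^'n \<Rightarrow> real^'n \<Rightarrow> real" where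
  "pair_offset r h i j M A = r\<^sup>2 + real CARD('n) / 4 + h - 2 * inner_off i j M A"

lemma pair_flip_dists:
  fixes M :: "real^'n" and h :: real
  assumes M: "M \<in> sphere 0 r" and ij: "i \<noteq> j" and A: "A \<in> pair_base_vertices i j"
  defines "q \<equiv> pair_offset r h i j M A"
  shows "(dist M A)\<^sup>2 + h = q - M$i - M$j"
    and "(dist M (flip_coord i A))\<^sup>2 + h = q + M$i - M$j"
    and "(dist M (flip_coord j A))\<^sup>2 + h = q - M$i + M$j"
    and "(dist M (flip_coord i (flip_coord j A)))\<^sup>2 + h = q + M$i + M$j"
proof -
  have A': "A \<in> cube_vertices" "A $ i = 1/2" "A $ j = 1/2" using A by (auto simp: pair_base_vertices_def)
  have off: "inner_off i j M (flip_coord i B) = inner_off i j M B"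
    "inner_off i j M (flip_coord j B) = inner_off i j M B" for B
    by (auto simp: inner_off_def flip_coord_nth intro!: sum.cong)
  note dist = dist_cube_vertex_sq[OF M, of _ h] inner_split_pair[OF ij, of M]
  show "(dist M A)\<^sup>2 + h = q - M$i - M$j"
    unfolding dist(1)[OF A'(1)] dist(2) q_def pair_offset_def by (simp add: A' algebra_simps)
  show "(dist M (flip_coord i A))\<^sup>2 + h = q + M$i - M$j"
    unfolding dist(1)[OF flip_coord_cube_vertices[OF A'(1)]] dist(2) q_def pair_offset_def
    using ij by (simp add: A' off flip_coord_nth algebra_simps)
  show "(dist M (flip_coord j A))\<^sup>2 + h = q - M$i + M$j"
    unfolding dist(1)[OF flip_coord_cube_vertices[OF A'(1)]] dist(2) q_def pair_offset_def
    using ij by (simp add: A' off flip_coord_nth algebra_simps)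
  show "(dist M (flip_coord i (flip_coord j A)))\<^sup>2 + h = q + M$i + M$j"
    unfolding dist(1)[OF flip_coord_cube_vertices[OF flip_coord_cube_vertices[OF A'(1)]]] dist(2)
      q_def pair_offset_def
    using ij by (simp add: A' off flip_coord_nth algebra_simps)
qed

lemma Hn_pair_decomposition:
  fixes M :: "real^'n"
  assumes M: "M \<in> sphere 0 r" and ij: "i \<noteq> j"
  shows "Hn h lam M = (\<Sum>A\<in>pair_base_vertices i j.
    four_point_sum (\<lambda>w. rpow w (lam/2)) (pair_offset r h i j M A) (M$i) (M$j))"
  unfolding Hn_def sum_cube_vertices_pair_split[OF ij]
proof (intro sum.cong refl)
  fix A assume A: "A \<in> pair_base_vertices i j"
  show "rpow ((dist M A)\<^sup>2 + h) (lam / 2) + rpow ((dist M (flip_coord i A))\<^sup>2 + h) (lam / 2)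
      + rpow ((dist M (flip_coord j A))\<^sup>2 + h) (lam / 2)
      + rpow ((dist M (flip_coord i (flip_coord j A)))\<^sup>2 + h) (lam / 2)
    = four_point_sum (\<lambda>w. rpow w (lam / 2)) (pair_offset r h i j M A) (M $ i) (M $ j)"
    unfolding pair_flip_dists[OF M ij A] four_point_sum_def by (simp add: add_ac)
qed

lemma pair_offset_attained:
  fixes M :: "real^'n"
  assumes M: "M \<in> sphere 0 r" and ij: "i \<noteq> j" and A: "A \<in> pair_base_vertices i j"
  shows "\<exists>B\<in>cube_vertices. (dist M B)\<^sup>2 + h = pair_offset r h i j M A - \<bar>M$i\<bar> - \<bar>M$j\<bar>"
proof -
  have V: "A \<in> cube_vertices" "flip_coord i A \<in> cube_vertices" "flip_coord j A \<in> cube_vertices"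
    "flip_coord i (flip_coord j A) \<in> cube_vertices"
    using A by (auto simp: pair_base_vertices_def intro!: flip_coord_cube_vertices)
  show ?thesis
    using pair_flip_dists[OF M ij A, of h] V
    by (cases "M$i \<ge> 0"; cases "M$j \<ge> 0") (auto simp: abs_if)
qed

lemma pair_offset_cong:
  assumes "\<And>k. k \<noteq> i \<Longrightarrow> k \<noteq> j \<Longrightarrow> N$k = M$k"
  shows "pair_offset r h i j N A = pair_offset r h i j M A"
  unfolding pair_offset_def using inner_off_cong[of i j N M A A] assms by auto

lemma Hn_pair_cong:
  fixes M N :: "real^'n"
  assumes M: "M \<in> sphere 0 r" and N: "N \<in> sphere 0 r" and ij: "i \<noteq> j"
    and other: "\<And>k. k \<noteq> i \<Longrightarrow> k \<noteq> j \<Longrightarrow> N$k = M$k"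
    and W: "(M$i)\<^sup>2 + (M$j)\<^sup>2 = (N$i)\<^sup>2 + (N$j)\<^sup>2" and prod: "\<bar>M$i * M$j\<bar> = \<bar>N$i * N$j\<bar>"
  shows "Hn h lam M = Hn h lam N"
  unfolding Hn_pair_decomposition[OF M ij] Hn_pair_decomposition[OF N ij]
  by (intro sum.cong refl) (simp add: pair_offset_cong[OF other] four_point_sum_cong[OF W prod])

text \<open>For \<open>lam \<le> 0\<close> the junk values of \<open>rpow 0\<close> must be excluded: \<open>Hn\<close> has a pole at every
  point where some \<open>(dist M A)\<^sup>2 + h\<close> vanishes.\<close>
definition Hn_regular :: "real \<Rightarrow> real \<Rightarrow> real^'n \<Rightarrow> bool" where
  "Hn_regular h lam M \<longleftrightarrow> 0 < lam \<or> (\<forall>A\<in>cube_vertices. 0 < (dist M A)\<^sup>2 + h)"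

lemma Hn_pair_strict_mono:
  fixes M N :: "real^'n" and \<sigma> :: real
  assumes M: "M \<in> sphere 0 r" and N: "N \<in> sphere 0 r" and ij: "i \<noteq> j"
    and other: "\<And>k. k \<noteq> i \<Longrightarrow> k \<noteq> j \<Longrightarrow> N$k = M$k"
    and W: "(M$i)\<^sup>2 + (M$j)\<^sup>2 = (N$i)\<^sup>2 + (N$j)\<^sup>2" and prod: "\<bar>M$i * M$j\<bar> < \<bar>N$i * N$j\<bar>"
    and sign: "\<sigma> * falling4 (lam/2) > 0"
    and h: "h \<ge> 0" and reg: "Hn_regular h lam N"
  shows "\<sigma> * Hn h lam M < \<sigma> * Hn h lam N"
proof -
  have "lam \<noteq> 0" using sign by (auto simp: falling4_def)
  hence rpow: "(\<lambda>w. rpow w (lam/2)) = (\<lambda>w. w powr (lam/2))" by (auto simp: rpow_def)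
  have "(\<Sum>A\<in>pair_base_vertices i j. \<sigma> * four_point_sum (\<lambda>w. w powr (lam/2)) (pair_offset r h i j M A) (M$i) (M$j))
      < (\<Sum>A\<in>pair_base_vertices i j. \<sigma> * four_point_sum (\<lambda>w. w powr (lam/2)) (pair_offset r h i j N A) (N$i) (N$j))"
  proof (rule sum_strict_mono[OF finite_pair_base_vertices pair_base_vertices_nonempty])
    fix A assume A: "A \<in> pair_base_vertices i j"
    have q: "pair_offset r h i j N A = pair_offset r h i j M A" by (rule pair_offset_cong[OF other])
    obtain B where B: "B \<in> cube_vertices" "(dist N B)\<^sup>2 + h = pair_offset r h i j M A - \<bar>N$i\<bar> - \<bar>N$j\<bar>"
      using pair_offset_attained[OF N ij A, of h] unfolding q by blast
    have "0 \<le> (dist N B)\<^sup>2 + h" using h by simp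
    hence "0 \<le> pair_offset r h i j M A - \<bar>N$i\<bar> - \<bar>N$j\<bar>" using B(2) by linarith
    moreover have "0 < lam/2 \<or> 0 < pair_offset r h i j M A - \<bar>N$i\<bar> - \<bar>N$j\<bar>"
      using reg B unfolding Hn_regular_def by auto
    ultimately show "\<sigma> * four_point_sum (\<lambda>w. w powr (lam/2)) (pair_offset r h i j M A) (M$i) (M$j)
      < \<sigma> * four_point_sum (\<lambda>w. w powr (lam/2)) (pair_offset r h i j N A) (N$i) (N$j)"
      unfolding q by (rule four_point_sum_powr_strict_mono[OF sign W prod])
  qed
  thus ?thesis
    unfolding Hn_pair_decomposition[OF M ij] Hn_pair_decomposition[OF N ij] rpow sum_distrib_left .
qed


lemma Hn_pair_power_cong:
  fixes M N :: "real^'n"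
  assumes M: "M \<in> sphere 0 r" and N: "N \<in> sphere 0 r" and ij: "i \<noteq> j"
    and other: "\<And>k. k \<noteq> i \<Longrightarrow> k \<noteq> j \<Longrightarrow> N$k = M$k"
    and W: "(M$i)\<^sup>2 + (M$j)\<^sup>2 = (N$i)\<^sup>2 + (N$j)\<^sup>2"
    and lam: "lam \<in> {2, 4, 6}" and h: "h \<ge> 0"
  shows "Hn h lam M = Hn h lam N"
proof -
  obtain k :: nat where k: "1 \<le> k" "k \<le> 3" "lam / 2 = real k" using lam by auto
  have rpow: "four_point_sum (\<lambda>w. rpow w (lam/2)) (pair_offset r h i j X A) (X$i) (X$j) =
      four_point_sum (\<lambda>w. w ^ k) (pair_offset r h i j X A) (X$i) (X$j)"
    if X: "X \<in> sphere 0 r" and A: "A \<in> pair_base_vertices i j" for X A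
  proof -
    have "0 \<le> w \<Longrightarrow> rpow w (lam/2) = w ^ k" for w using k by (simp add: rpow_def powr_realpow')
    moreover have "0 \<le> (dist X B)\<^sup>2 + h" for B using h by simp
    ultimately show ?thesis
      unfolding four_point_sum_def pair_flip_dists(1-4)[OF X ij A, of h, symmetric] by simp
  qed
  show ?thesis
    unfolding Hn_pair_decomposition[OF M ij] Hn_pair_decomposition[OF N ij]
  proof (intro sum.cong refl)
    fix A assume A: "A \<in> pair_base_vertices i j"
    have q: "pair_offset r h i j N A = pair_offset r h i j M A" by (rule pair_offset_cong[OF other])
    show "four_point_sum (\<lambda>w. rpow w (lam/2)) (pair_offset r h i j M A) (M$i) (M$j) =
        four_point_sum (\<lambda>w. rpow w (lam/2)) (pair_offset r h i j N A) (N$i) (N$j)"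
      unfolding rpow[OF M A] rpow[OF N A] unfolding q
      by (rule four_point_sum_power_cong[OF k(2) W])
  qed
qed

section \<open>Moves on the sphere\<close>

definition replace_pair :: "real^'n \<Rightarrow> 'n \<Rightarrow> 'n \<Rightarrow> real \<Rightarrow> real \<Rightarrow> real^'n" where
  "replace_pair M i j a b = (\<chi> k. if k = i then a else if k = j then b else M$k)"

lemma replace_pair_nth:
  "i \<noteq> j \<Longrightarrow> replace_pair M i j a b $ i = a"
  "i \<noteq> j \<Longrightarrow> replace_pair M i j a b $ j = b"
  "k \<noteq> i \<Longrightarrow> k \<noteq> j \<Longrightarrow> replace_pair M i j a b $ k = M $ k"
  by (auto simp: replace_pair_def)

lemma replace_pair_sphere:
  assumes M: "M \<in> sphere 0 r" and ij: "i \<noteq> j" and ab: "a\<^sup>2 + b\<^sup>2 = (M$i)\<^sup>2 + (M$j)\<^sup>2"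
  shows "replace_pair M i j a b \<in> sphere 0 r"
proof -
  let ?N = "replace_pair M i j a b"
  have "inner_off i j ?N ?N = inner_off i j M M"
    by (rule inner_off_cong) (simp add: replace_pair_nth)
  hence "?N \<bullet> ?N = M \<bullet> M"
    using ab ij by (simp add: inner_split_pair[OF ij] replace_pair_nth power2_eq_square)
  thus ?thesis using M by (simp add: norm_eq_sqrt_inner)
qed

definition collapse_pair :: "real^'n \<Rightarrow> 'n \<Rightarrow> 'n \<Rightarrow> real^'n" where
  "collapse_pair M i j = replace_pair M i j (sqrt ((M$i)\<^sup>2 + (M$j)\<^sup>2)) 0"

definition balance_pair :: "real^'n \<Rightarrow> 'n \<Rightarrow> 'n \<Rightarrow> real^'n" where
  "balance_pair M i j = replace_pair M i j (sqrt (((M$i)\<^sup>2 + (M$j)\<^sup>2) / 2)) (sqrt (((M$i)\<^sup>2 + (M$j)\<^sup>2) / 2))"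

lemma axis_point_if_one_nonzero_coord:
  fixes M :: "real^'n"
  assumes r: "r > 0" and M: "M \<in> sphere 0 r" and i: "\<And>k. k \<noteq> i \<Longrightarrow> M$k = 0"
  shows "M \<in> axis_points r"
proof -
  have "M \<bullet> M = M$i * M$i"
    unfolding inner_vec_def inner_real_def by (subst sum.remove[of _ i]) (auto simp: i)
  hence "(M$i)\<^sup>2 = r\<^sup>2" using M power2_norm_eq_inner[of M] by (simp add: power2_eq_square)
  hence "M$i = r \<or> M$i = -r" by (simp add: power2_eq_iff)
  hence "M = r *\<^sub>R axis i 1 \<or> M = - (r *\<^sub>R axis i 1)" using i by (auto simp: vec_eq_iff axis_def)
  thus ?thesis unfolding axis_points_def by blast
qed

lemma collapse_pair_induct:
  fixes P :: "real^'n \<Rightarrow> bool" and Q :: "real^'n \<Rightarrow> real^'n \<Rightarrow> bool"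
  assumes r: "r > 0"
    and step: "\<And>M i j. M \<in> sphere 0 r \<Longrightarrow> P M \<Longrightarrow> i \<noteq> j \<Longrightarrow> M$i \<noteq> 0 \<Longrightarrow> M$j \<noteq> 0 \<Longrightarrow>
         P (collapse_pair M i j) \<and> Q (collapse_pair M i j) M"
    and trans: "transp Q"
  shows "M \<in> sphere 0 r \<Longrightarrow> P M \<Longrightarrow> M \<in> axis_points r \<or> (\<exists>e\<in>axis_points r. Q e M)"
proof (induct "card {k. M$k \<noteq> 0}" arbitrary: M rule: less_induct)
  case less
  show ?case
  proof (cases "\<exists>i j. i \<noteq> j \<and> M$i \<noteq> 0 \<and> M$j \<noteq> 0")
    case False
    then obtain i where "\<And>k. k \<noteq> i \<Longrightarrow> M$k = 0" by blast
    thus ?thesis using axis_point_if_one_nonzero_coord[OF r less(2)] by blast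
  next
    case True
    then obtain i j where ij: "i \<noteq> j" "M$i \<noteq> 0" "M$j \<noteq> 0" by blast
    let ?N = "collapse_pair M i j"
    have N: "?N \<in> sphere 0 r"
      unfolding collapse_pair_def using less(2) ij by (intro replace_pair_sphere) auto
    have "{k. ?N $ k \<noteq> 0} \<subseteq> {k. M$k \<noteq> 0} - {j}"
      using ij by (auto simp: collapse_pair_def replace_pair_def)
    hence "card {k. ?N $ k \<noteq> 0} \<le> card ({k. M$k \<noteq> 0} - {j})" by (intro card_mono) auto
    also have "\<dots> < card {k. M$k \<noteq> 0}" using ij by (intro card_Diff1_less) auto
    finally have "card {k. ?N $ k \<noteq> 0} < card {k. M$k \<noteq> 0}" .
    moreover have "P ?N" "Q ?N M" using step[OF less(2,3) ij] by auto
    ultimately have "?N \<in> axis_points r \<or> (\<exists>e\<in>axis_points r. Q e ?N)" using less(1) N by blast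
    thus ?thesis using \<open>Q ?N M\<close> transpD[OF trans] by blast
  qed
qed

lemma exists_other_index: "CARD('n::finite) \<ge> 2 \<Longrightarrow> \<exists>k::'n. k \<noteq> i"
proof (rule ccontr)
  assume n: "CARD('n) \<ge> 2" and "\<not> (\<exists>k::'n. k \<noteq> i)"
  hence "(UNIV :: 'n set) = {i}" by auto
  hence "CARD('n) = card {i}" by (rule arg_cong)
  thus False using n by simp
qed

lemma dist_cube_vertices_pos_if_zero_coord:
  fixes M :: "real^'n"
  assumes "M$k = 0" "h \<ge> 0"
  shows "\<forall>A\<in>cube_vertices. 0 < (dist M A)\<^sup>2 + h"
proof -
  have "M \<noteq> A" if "A \<in> cube_vertices" for A using cube_vertex_nth[OF that, of k] assms(1) by auto
  thus ?thesis using assms(2) by (auto simp: add_pos_nonneg)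
qed

lemma axis_points_cases:
  assumes "X \<in> axis_points r"
  obtains i a where "\<bar>a\<bar> = \<bar>r\<bar>" "X = a *\<^sub>R axis i 1"
proof -
  obtain i where "X = r *\<^sub>R axis i 1 \<or> X = (- r) *\<^sub>R axis i 1"
    using assms unfolding axis_points_def by auto
  thus ?thesis using that[of r i] that[of "-r" i] by auto
qed

lemma axis_points_subset_sphere: "r \<ge> 0 \<Longrightarrow> axis_points r \<subseteq> sphere (0::real^'n) r"
  by (auto elim!: axis_points_cases)

lemma axis_point_zero_coord:
  assumes "CARD('n) \<ge> 2" "X \<in> (axis_points r :: (real^'n) set)"
  obtains k where "X $ k = 0"
proof -
  obtain i a where X: "X = a *\<^sub>R axis i 1" using assms(2) by (rule axis_points_cases)
  obtain k where "k \<noteq> i" using exists_other_index[OF assms(1)] by blast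
  hence "X $ k = 0" using X by (simp add: axis_def)
  thus ?thesis by (rule that)
qed

lemma Hn_axis_points_eq:
  assumes n2: "CARD('n) \<ge> 2" and r: "r \<ge> 0"
    and X: "X \<in> (axis_points r :: (real^'n) set)" and Y: "Y \<in> (axis_points r :: (real^'n) set)"
  shows "Hn h lam X = Hn h lam Y"
proof -
  have pair: "Hn h lam (a *\<^sub>R axis i 1 :: real^'n) = Hn h lam (b *\<^sub>R axis j 1)"
    if "i \<noteq> j" "\<bar>a\<bar> = \<bar>r\<bar>" "\<bar>b\<bar> = \<bar>r\<bar>" for i j a b
  proof (rule Hn_pair_cong[OF _ _ that(1)])
    show "(a *\<^sub>R axis i 1 :: real^'n) \<in> sphere 0 r" "(b *\<^sub>R axis j 1 :: real^'n) \<in> sphere 0 r"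
      using that r by simp_all
    have "a\<^sup>2 = b\<^sup>2" using that by (metis power2_abs)
    thus "((a *\<^sub>R axis i 1 :: real^'n) $ i)\<^sup>2 + ((a *\<^sub>R axis i 1 :: real^'n) $ j)\<^sup>2 =
      ((b *\<^sub>R axis j 1 :: real^'n) $ i)\<^sup>2 + ((b *\<^sub>R axis j 1 :: real^'n) $ j)\<^sup>2"
      using that by (simp add: axis_def)
  qed (use that in \<open>simp_all add: axis_def\<close>)
  obtain i a where Xa: "\<bar>a\<bar> = \<bar>r\<bar>" "X = a *\<^sub>R axis i 1" using X by (rule axis_points_cases)
  obtain j b where Yb: "\<bar>b\<bar> = \<bar>r\<bar>" "Y = b *\<^sub>R axis j 1" using Y by (rule axis_points_cases)
  obtain k where k: "k \<noteq> i" using exists_other_index[OF n2] by blast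
  show ?thesis
  proof (cases "j = k")
    case True thus ?thesis using pair[OF k[symmetric] Xa(1) Yb(1)] Xa Yb by simp
  next
    case False thus ?thesis using pair[OF k[symmetric] Xa(1), of r] pair[of k j r b] False Xa Yb by auto
  qed
qed

section \<open>Extremal points\<close>

lemma Hn_axis_points_strict_extremal:
  fixes \<sigma> :: real and M :: "real^'n"
  assumes r: "r > 0" and h: "h \<ge> 0"
    and sign: "\<sigma> * falling4 (lam/2) > 0"
    and M: "M \<in> sphere 0 r" and reg: "Hn_regular h lam M"
  shows "M \<in> axis_points r \<or> (\<exists>e\<in>axis_points r :: (real^'n) set. \<sigma> * Hn h lam e < \<sigma> * Hn h lam M)"
proof -
  have step: "Hn_regular h lam (collapse_pair M i j) \<and>
      \<sigma> * Hn h lam (collapse_pair M i j) < \<sigma> * Hn h lam M"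
    if M: "M \<in> sphere 0 r" and reg: "Hn_regular h lam M" and ij: "i \<noteq> j"
      and nz: "M$i \<noteq> 0" "M$j \<noteq> 0" for M :: "real^'n" and i j
  proof
    let ?N = "collapse_pair M i j"
    have N: "?N $ i = sqrt ((M$i)\<^sup>2 + (M$j)\<^sup>2)" "?N $ j = 0"
      "\<And>k. k \<noteq> i \<Longrightarrow> k \<noteq> j \<Longrightarrow> M $ k = ?N $ k"
      using ij by (simp_all add: collapse_pair_def replace_pair_nth)
    show "Hn_regular h lam ?N"
      using dist_cube_vertices_pos_if_zero_coord[OF N(2) h] by (simp add: Hn_regular_def)
    show "\<sigma> * Hn h lam ?N < \<sigma> * Hn h lam M"
    proof (rule Hn_pair_strict_mono[OF _ M ij N(3) _ _ sign h reg])
      show "?N \<in> sphere 0 r" unfolding collapse_pair_def using M ij by (intro replace_pair_sphere) auto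
    qed (use N nz in simp_all)
  qed
  have trans: "transp (\<lambda>x y :: real^'n. \<sigma> * Hn h lam x < \<sigma> * Hn h lam y)" by (auto intro: transpI)
  show ?thesis by (rule collapse_pair_induct[where P = "Hn_regular h lam", OF r _ trans M reg]) (fact step)
qed

lemma min_points_uminus: "min_points S (\<lambda>x. - f x) = max_points S f"
  by (simp add: min_points_def max_points_def)

lemma min_points_Hn_axis_points:
  fixes \<sigma> :: real and S :: "(real^'n) set"
  assumes n2: "CARD('n) \<ge> 2" and r: "r > 0" and h: "h \<ge> 0"
    and sign: "\<sigma> * falling4 (lam/2) > 0"
    and S: "axis_points r \<subseteq> S" "S \<subseteq> sphere 0 r" and reg: "\<And>M. M \<in> S \<Longrightarrow> Hn_regular h lam M"
  shows "min_points S (\<lambda>M. \<sigma> * Hn h lam M) = axis_points r"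
proof -
  have E_le: "\<sigma> * Hn h lam e \<le> \<sigma> * Hn h lam N" if e: "e \<in> axis_points r" and N: "N \<in> S" for e N :: "real^'n"
    using Hn_axis_points_strict_extremal[OF r h sign _ reg[OF N]] S(2) N
      Hn_axis_points_eq[OF n2 _ e, of _ h lam] r by (force simp: less_imp_le)
  show ?thesis
  proof
    show "min_points S (\<lambda>M. \<sigma> * Hn h lam M) \<subseteq> axis_points r"
    proof
      fix M assume "M \<in> min_points S (\<lambda>M. \<sigma> * Hn h lam M)"
      hence "M \<in> S" "\<forall>N\<in>S. \<sigma> * Hn h lam M \<le> \<sigma> * Hn h lam N"
        unfolding min_points_def by blast+
      thus "M \<in> axis_points r"
        using Hn_axis_points_strict_extremal[OF r h sign _ reg] S by force
    qed
    show "axis_points r \<subseteq> min_points S (\<lambda>M. \<sigma> * Hn h lam M)"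
      using S(1) E_le unfolding min_points_def by blast
  qed
qed

lemma diag_point_nth:
  "X \<in> diag_points r \<Longrightarrow> X $ k = r / sqrt (real CARD('n)) \<or> X $ k = - (r / sqrt (real CARD('n)))"
  for X :: "real^'n"
  by (simp add: diag_points_def)

lemma diag_points_subset_sphere:
  assumes r: "r \<ge> 0"
  shows "diag_points r \<subseteq> sphere (0::real^'n) r"
proof
  fix X :: "real^'n" assume X: "X \<in> diag_points r"
  have sq: "X $ k * X $ k = r\<^sup>2 / real CARD('n)" for k
    using diag_point_nth[OF X, of k] by (elim disjE) (erule ssubst, simp add: power2_eq_square)+
  have "X \<bullet> X = (\<Sum>k\<in>(UNIV::'n set). r\<^sup>2 / real CARD('n))"
    unfolding inner_vec_def inner_real_def by (intro sum.cong refl sq)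
  hence "norm X = sqrt (r\<^sup>2)" by (simp add: norm_eq_sqrt_inner)
  thus "X \<in> sphere 0 r" using r by simp
qed

lemma diag_point_if_abs_coords_eq:
  fixes M :: "real^'n"
  assumes r: "r \<ge> 0" and M: "M \<in> sphere 0 r" and eq: "\<And>i j. \<bar>M$i\<bar> = \<bar>M$j\<bar>"
  shows "M \<in> diag_points r"
proof -
  obtain i0 :: 'n where True by blast
  define t where "t = \<bar>M$i0\<bar>"
  have "M $ k * M $ k = t\<^sup>2" for k using eq[of k i0] unfolding t_def by (metis abs_mult_self_eq power2_eq_square)
  hence "M \<bullet> M = (\<Sum>k\<in>(UNIV::'n set). t\<^sup>2)"
    unfolding inner_vec_def inner_real_def by (intro sum.cong refl)
  moreover have "M \<bullet> M = r\<^sup>2" using M by (simp flip: power2_norm_eq_inner)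
  ultimately have "t\<^sup>2 = (r / sqrt (real CARD('n)))\<^sup>2" by (simp add: power_divide)
  moreover have "0 \<le> t" "0 \<le> r / sqrt (real CARD('n))" using r by (simp_all add: t_def)
  ultimately have "t = r / sqrt (real CARD('n))" by (simp only: power2_eq_iff_nonneg)
  hence "\<bar>M$k\<bar> = r / sqrt (real CARD('n))" for k using eq[of k i0] t_def by simp
  thus ?thesis unfolding diag_points_def by (simp add: abs_eq_iff')
qed

lemma Hn_diag_points_eq:
  assumes r: "r \<ge> 0" and X: "X \<in> (diag_points r :: (real^'n) set)" and Y: "Y \<in> (diag_points r :: (real^'n) set)"
  shows "Hn h lam X = Hn h lam Y"
proof -
  define T where "T A = (\<chi> k::'n. if X$k = Y$k then A$k else - A$k)" for A :: "real^'n"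
  have TT: "T (T A) = A" for A by (simp add: T_def vec_eq_iff)
  have TV: "A \<in> cube_vertices \<Longrightarrow> T A \<in> cube_vertices" for A by (auto simp: T_def cube_vertices_def)
  have inner: "Y \<bullet> A = X \<bullet> T A" for A
  proof -
    have "Y$k * A$k = X$k * T A $ k" for k
      using diag_point_nth[OF X, of k] diag_point_nth[OF Y, of k] by (auto simp: T_def)
    thus ?thesis by (simp add: inner_vec_def)
  qed
  have XY: "X \<in> sphere 0 r" "Y \<in> sphere 0 r" using X Y diag_points_subset_sphere[OF r] by auto
  have "Hn h lam X = (\<Sum>A\<in>cube_vertices. rpow (r\<^sup>2 + real CARD('n) / 4 + h - 2 * (X \<bullet> A)) (lam/2))"
    unfolding Hn_def by (intro sum.cong refl) (simp add: dist_cube_vertex_sq[OF XY(1)])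
  also have "\<dots> = (\<Sum>A\<in>cube_vertices. rpow (r\<^sup>2 + real CARD('n) / 4 + h - 2 * (Y \<bullet> A)) (lam/2))"
    by (rule sum.reindex_bij_witness[where i = T and j = T]) (auto simp: TT TV inner)
  also have "\<dots> = Hn h lam Y"
    unfolding Hn_def by (intro sum.cong refl) (simp add: dist_cube_vertex_sq[OF XY(2)])
  finally show ?thesis .
qed

lemma Hn_balance_strict_mono:
  fixes \<sigma> :: real and M :: "real^'n"
  assumes r: "r \<ge> 0" and h: "h \<ge> 0"
    and sign: "\<sigma> * falling4 (lam/2) > 0"
    and reg: "\<And>N :: real^'n. N \<in> sphere 0 r \<Longrightarrow> Hn_regular h lam N"
    and M: "M \<in> sphere 0 r" and not_diag: "M \<notin> diag_points r"
  shows "\<exists>N\<in>sphere (0::real^'n) r. \<sigma> * Hn h lam M < \<sigma> * Hn h lam N"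
proof -
  obtain i j where ne: "\<bar>M$i\<bar> \<noteq> \<bar>M$j\<bar>" using diag_point_if_abs_coords_eq[OF r M] not_diag by blast
  hence ij: "i \<noteq> j" by auto
  define s where "s = sqrt (((M$i)\<^sup>2 + (M$j)\<^sup>2) / 2)"
  let ?N = "balance_pair M i j"
  have N: "?N $ i = s" "?N $ j = s" "\<And>k. k \<noteq> i \<Longrightarrow> k \<noteq> j \<Longrightarrow> ?N $ k = M $ k"
    using ij by (simp_all add: balance_pair_def replace_pair_nth s_def)
  have s2: "s\<^sup>2 = ((M$i)\<^sup>2 + (M$j)\<^sup>2) / 2" by (simp add: s_def)
  have N_sphere: "?N \<in> sphere 0 r"
    unfolding balance_pair_def using M ij by (intro replace_pair_sphere) (simp_all add: s2[unfolded s_def])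
  have "0 < (\<bar>M$i\<bar> - \<bar>M$j\<bar>)\<^sup>2" using ne by simp
  hence "\<bar>M$i * M$j\<bar> < s\<^sup>2" unfolding s2 by (simp add: power2_eq_square abs_mult algebra_simps)
  hence "\<sigma> * Hn h lam M < \<sigma> * Hn h lam ?N"
    using Hn_pair_strict_mono[OF M N_sphere ij N(3) _ _ sign h reg[OF N_sphere]] s2 N
    by (simp add: power2_eq_square)
  thus ?thesis using N_sphere by blast
qed

lemma continuous_on_Hn:
  assumes h: "h \<ge> 0" and lam: "lam \<noteq> 0" and reg: "\<And>M :: real^'n. M \<in> S \<Longrightarrow> Hn_regular h lam M"
  shows "continuous_on S (Hn h lam :: real^'n \<Rightarrow> real)"
proof -
  have "Hn h lam = (\<lambda>M :: real^'n. \<Sum>A\<in>cube_vertices. ((dist M A)\<^sup>2 + h) powr (lam / 2))"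
    using lam by (auto simp: Hn_def rpow_def fun_eq_iff)
  moreover have "continuous_on S (\<lambda>M :: real^'n. \<Sum>A\<in>cube_vertices. ((dist M A)\<^sup>2 + h) powr (lam / 2))"
    using h reg unfolding Hn_regular_def
    by (intro continuous_on_sum continuous_on_powr' continuous_intros) force+
  ultimately show ?thesis by simp
qed

lemma max_points_Hn_diag_points:
  fixes \<sigma> :: real
  assumes r: "r > 0" and h: "h \<ge> 0"
    and sign: "\<sigma> * falling4 (lam/2) > 0"
    and reg: "\<And>N :: real^'n. N \<in> sphere 0 r \<Longrightarrow> Hn_regular h lam N"
  shows "max_points (sphere 0 r) (\<lambda>M. \<sigma> * Hn h lam M) = (diag_points r :: (real^'n) set)"
proof -
  let ?f = "\<lambda>M :: real^'n. \<sigma> * Hn h lam M"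
  have "lam \<noteq> 0" using sign by (auto simp: falling4_def)
  hence "continuous_on (sphere 0 r) ?f" by (intro continuous_intros continuous_on_Hn h reg)
  then obtain M0 where M0: "M0 \<in> sphere 0 r" "\<And>N. N \<in> sphere 0 r \<Longrightarrow> ?f N \<le> ?f M0"
    using continuous_attains_sup[of "sphere 0 r" ?f] r by auto
  have no_better: "M \<in> diag_points r" if "M \<in> sphere 0 r" "\<And>N. N \<in> sphere 0 r \<Longrightarrow> ?f N \<le> ?f M" for M
    using Hn_balance_strict_mono[OF less_imp_le[OF r] h sign reg] that by force
  have M0_diag: "M0 \<in> diag_points r" using no_better[OF M0(1)] M0(2) by blast
  show ?thesis
  proof
    show "max_points (sphere 0 r) ?f \<subseteq> diag_points r"
      using no_better unfolding max_points_def by blast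
    show "diag_points r \<subseteq> max_points (sphere 0 r) ?f"
    proof
      fix X :: "real^'n" assume X: "X \<in> diag_points r"
      have "Hn h lam X = Hn h lam M0" using Hn_diag_points_eq[OF _ X M0_diag] r by simp
      thus "X \<in> max_points (sphere 0 r) ?f"
        using M0(2) X diag_points_subset_sphere[of r] r unfolding max_points_def by auto
    qed
  qed
qed

lemma norm_cube_vertex: "A \<in> cube_vertices \<Longrightarrow> norm A = sqrt (real CARD('n)) / 2"
  for A :: "real^'n"
  by (simp add: norm_eq_sqrt_inner cube_vertex_inner_self real_sqrt_divide)

lemma Hn_regular_on_sphere:
  fixes N :: "real^'n"
  assumes h: "h \<ge> 0" and nondeg: "\<not> (h = 0 \<and> r = sqrt (real CARD('n)) / 2)" and N: "N \<in> sphere 0 r"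
  shows "Hn_regular h lam N"
proof -
  have "0 < (dist N A)\<^sup>2 + h" if A: "A \<in> cube_vertices" for A
  proof (cases "h = 0")
    case True
    hence "N \<noteq> A" using N nondeg norm_cube_vertex[OF A] by auto
    thus ?thesis using True by simp
  qed (use h in \<open>simp add: add_nonneg_pos\<close>)
  thus ?thesis by (simp add: Hn_regular_def)
qed

lemma cube_vertex_islimpt_circumsphere:
  assumes n2: "CARD('n) \<ge> 2" and A: "A \<in> (cube_vertices :: (real^'n) set)"
  shows "A islimpt sphere 0 (sqrt (real CARD('n)) / 2) - cube_vertices"
proof -
  let ?S = "sphere (0::real^'n) (sqrt (real CARD('n)) / 2)"
  have A_S: "A \<in> ?S" using norm_cube_vertex[OF A] by simp
  have "A islimpt ?S"
  proof (rule connected_imp_perfect[OF connected_sphere A_S])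
    show "2 \<le> DIM(real^'n)" using n2 by simp
    show "?S \<noteq> {x}" for x
    proof
      assume S: "?S = {x}"
      have "A \<in> {x}" "- A \<in> {x}" using A_S unfolding S[symmetric] by simp_all
      hence "- A = A" by (simp only: singleton_iff)
      hence "(- A) $ i = A $ i" for i by (simp only:)
      hence "A = 0" by (simp add: vec_eq_iff)
      thus False using A_S by simp
    qed
  qed
  hence "A islimpt cube_vertices \<union> (?S - cube_vertices)" by (rule islimpt_subset) blast
  thus ?thesis using islimpt_Un_finite[OF finite_cube_vertices] by blast
qed

lemma Hn_unbounded_on_circumsphere:
  assumes n2: "CARD('n) \<ge> 2" and lam: "lam < 0" and r: "r = sqrt (real CARD('n)) / 2"
  shows "\<not> bdd_above (Hn 0 lam ` {M \<in> sphere (0::real^'n) r. \<forall>A\<in>cube_vertices. (dist M A)\<^sup>2 + 0 > 0})"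
proof
  assume "bdd_above (Hn 0 lam ` {M \<in> sphere (0::real^'n) r. \<forall>A\<in>cube_vertices. (dist M A)\<^sup>2 + 0 > 0})"
  then obtain B where B: "\<And>M :: real^'n. M \<in> sphere 0 r \<Longrightarrow> (\<forall>A\<in>cube_vertices. (dist M A)\<^sup>2 > 0) \<Longrightarrow>
      Hn 0 lam M \<le> B"
    unfolding bdd_above_def by auto
  define \<delta> where "\<delta> = max B 1 powr (2 / lam)"
  have \<delta>: "\<delta> > 0" "\<delta> powr (lam / 2) = max B 1" unfolding \<delta>_def using lam by (simp_all add: powr_powr)
  define A0 :: "real^'n" where "A0 = (\<chi> k. 1/2)"
  have A0: "A0 \<in> cube_vertices" by (simp add: A0_def cube_vertices_def)
  have "\<exists>P\<in>sphere 0 r - cube_vertices. P \<noteq> A0 \<and> dist P A0 < sqrt \<delta>"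
    using cube_vertex_islimpt_circumsphere[OF n2 A0] \<delta>(1) unfolding islimpt_approachable r by simp
  then obtain P where P: "P \<in> sphere 0 r" "P \<notin> cube_vertices" "dist P A0 < sqrt \<delta>" by blast
  have P_reg: "(dist P A)\<^sup>2 > 0" if "A \<in> cube_vertices" for A using that P(2) by auto
  have "max B 1 < ((dist P A0)\<^sup>2) powr (lam / 2)"
    unfolding \<delta>(2)[symmetric]
  proof (rule powr_less_mono2_neg)
    show "lam / 2 < 0" "0 < (dist P A0)\<^sup>2" using lam P_reg[OF A0] by simp_all
    show "(dist P A0)\<^sup>2 < \<delta>" using P(3) \<delta>(1) real_sqrt_less_iff[of "(dist P A0)\<^sup>2" \<delta>] by simp
  qed
  also have "\<dots> = rpow ((dist P A0)\<^sup>2 + 0) (lam / 2)" using lam by (simp add: rpow_def)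
  also have "\<dots> \<le> Hn 0 lam P"
    unfolding Hn_def by (rule member_le_sum) (simp_all add: A0 finite_cube_vertices rpow_def)
  also have "\<dots> \<le> B" using B[OF P(1)] P_reg by blast
  finally show False by simp
qed

lemma Hn_constant_on_sphere:
  fixes M N :: "real^'n"
  assumes n2: "CARD('n) \<ge> 2" and r: "r > 0" and h: "h \<ge> 0" and lam: "lam \<in> {0, 2, 4, 6}"
    and M: "M \<in> sphere 0 r" and N: "N \<in> sphere 0 r"
  shows "Hn h lam M = Hn h lam N"
proof (cases "lam = 0")
  case True
  have "rpow t 0 = 1" for t by (simp add: rpow_def)
  thus ?thesis by (simp add: Hn_def True)
next
  case False
  hence lam': "lam \<in> {2, 4, 6}" using lam by auto
  have step: "True \<and> Hn h lam (collapse_pair X i j) = Hn h lam X"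
    if X: "X \<in> sphere 0 r" and ij: "i \<noteq> j" for X :: "real^'n" and i j
  proof (intro conjI TrueI Hn_pair_power_cong[OF _ X ij _ _ lam' h])
    show "collapse_pair X i j \<in> sphere 0 r"
      unfolding collapse_pair_def using X ij by (intro replace_pair_sphere) auto
  qed (use ij in \<open>simp_all add: collapse_pair_def replace_pair_nth\<close>)
  have trans: "transp (\<lambda>x y :: real^'n. Hn h lam x = Hn h lam y)" by (auto intro: transpI)
  have to_axis: "\<exists>e\<in>axis_points r :: (real^'n) set. Hn h lam e = Hn h lam X" if "X \<in> sphere 0 r" for X :: "real^'n"
    using collapse_pair_induct[where P = "\<lambda>_. True", OF r _ trans that] step by blast
  obtain e1 e2 :: "real^'n" where "e1 \<in> axis_points r" "e2 \<in> axis_points r"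
    "Hn h lam e1 = Hn h lam M" "Hn h lam e2 = Hn h lam N"
    using to_axis[OF M] to_axis[OF N] by blast
  thus ?thesis using Hn_axis_points_eq[OF n2, of r e1 e2] r by simp
qed

lemma falling4_split: "falling4 p = (p * (p - 1)) * ((p - 2) * (p - 3))"
  by (simp add: falling4_def mult.assoc)

lemma falling4_pos: "p < 0 \<or> (1 < p \<and> p < 2) \<or> 3 < p \<Longrightarrow> 0 < falling4 p"
  unfolding falling4_split by (auto simp: zero_less_mult_iff)

lemma falling4_neg: "(0 < p \<and> p < 1) \<or> (2 < p \<and> p < 3) \<Longrightarrow> falling4 p < 0"
  unfolding falling4_split by (auto simp: mult_less_0_iff zero_less_mult_iff)

lemma Hn_nonconstant_on_sphere:
  assumes n2: "CARD('n) \<ge> 2" and r: "r > 0" and h: "h \<ge> 0" and lam: "lam \<notin> {0, 2, 4, 6}"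
  shows "\<exists>M\<in>sphere (0::real^'n) r. \<exists>N\<in>sphere (0::real^'n) r. Hn h lam M \<noteq> Hn h lam N"
proof (rule ccontr)
  assume "\<not> ?thesis"
  hence const: "Hn h lam M = Hn h lam N" if "M \<in> sphere 0 r" "N \<in> sphere 0 r" for M N :: "real^'n"
    using that by blast
  define \<sigma> :: real where "\<sigma> = (if falling4 (lam/2) > 0 then 1 else -1)"
  have "falling4 (lam/2) \<noteq> 0" using lam by (auto simp: falling4_def)
  hence sign: "\<sigma> * falling4 (lam/2) > 0" by (auto simp: \<sigma>_def)
  define d :: "real^'n" where "d = (\<chi> k. r / sqrt (real CARD('n)))"
  have d: "d \<in> diag_points r" by (simp add: d_def diag_points_def)
  hence d_S: "d \<in> sphere 0 r" using diag_points_subset_sphere[OF less_imp_le[OF r]] by blast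
  show False
  proof (cases "lam < 0 \<and> h = 0 \<and> r = sqrt (real CARD('n)) / 2")
    case True
    have "Hn h lam ` {M \<in> sphere (0::real^'n) r. \<forall>A\<in>cube_vertices. (dist M A)\<^sup>2 + h > 0} \<subseteq> {Hn h lam d}"
      using const[OF _ d_S] by blast
    hence "bdd_above (Hn h lam ` {M \<in> sphere (0::real^'n) r. \<forall>A\<in>cube_vertices. (dist M A)\<^sup>2 + h > 0})"
      by (rule bdd_above_mono[rotated]) simp
    thus False using Hn_unbounded_on_circumsphere[OF n2, of lam r] True by simp
  next
    case False
    hence reg: "Hn_regular h lam N" if "N \<in> sphere (0::real^'n) r" for N
      using Hn_regular_on_sphere[OF h _ that, of lam] lam by (cases "0 < lam") (auto simp: Hn_regular_def)
    have "d \<notin> axis_points r"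
    proof
      assume "d \<in> axis_points r"
      with n2 obtain k where "d $ k = 0" by (rule axis_point_zero_coord)
      thus False using r by (simp add: d_def)
    qed
    then obtain e :: "real^'n" where e: "e \<in> axis_points r" "\<sigma> * Hn h lam e < \<sigma> * Hn h lam d"
      using Hn_axis_points_strict_extremal[OF r h sign d_S reg[OF d_S]] by blast
    have "e \<in> sphere 0 r" using e(1) axis_points_subset_sphere[OF less_imp_le[OF r]] by blast
    thus False using const[OF _ d_S] e(2) by simp
  qed
qed

lemma max_points_uminus: "max_points S (\<lambda>x. - f x) = min_points S f"
  by (simp add: min_points_def max_points_def)

lemma Hn_extrema_if_falling4_pos:
  assumes n2: "CARD('n) \<ge> 2" and r: "r > 0" and h: "h \<ge> 0"
    and sign: "falling4 (lam/2) > 0" and lam: "0 < lam"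
  shows "min_points (sphere 0 r) (Hn h lam) = (axis_points r :: (real^'n) set)"
    and "max_points (sphere 0 r) (Hn h lam) = (diag_points r :: (real^'n) set)"
proof -
  have reg: "Hn_regular h lam M" for M :: "real^'n" using lam by (simp add: Hn_regular_def)
  have "min_points (sphere 0 r) (\<lambda>M. 1 * Hn h lam M) = (axis_points r :: (real^'n) set)"
    using axis_points_subset_sphere[of r] r by (intro min_points_Hn_axis_points n2 r h reg) (simp_all add: sign)
  thus "min_points (sphere 0 r) (Hn h lam) = (axis_points r :: (real^'n) set)" by simp
  have "max_points (sphere 0 r) (\<lambda>M. 1 * Hn h lam M) = (diag_points r :: (real^'n) set)"
    by (intro max_points_Hn_diag_points r h reg) (simp add: sign)
  thus "max_points (sphere 0 r) (Hn h lam) = (diag_points r :: (real^'n) set)" by simp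
qed

lemma Hn_extrema_if_falling4_neg:
  assumes n2: "CARD('n) \<ge> 2" and r: "r > 0" and h: "h \<ge> 0"
    and sign: "falling4 (lam/2) < 0" and lam: "0 < lam"
  shows "max_points (sphere 0 r) (Hn h lam) = (axis_points r :: (real^'n) set)"
    and "min_points (sphere 0 r) (Hn h lam) = (diag_points r :: (real^'n) set)"
proof -
  have reg: "Hn_regular h lam M" for M :: "real^'n" using lam by (simp add: Hn_regular_def)
  have "min_points (sphere 0 r) (\<lambda>M. -1 * Hn h lam M) = (axis_points r :: (real^'n) set)"
    using axis_points_subset_sphere[of r] r by (intro min_points_Hn_axis_points n2 r h reg) (simp_all add: sign)
  thus "max_points (sphere 0 r) (Hn h lam) = (axis_points r :: (real^'n) set)" by (simp add: min_points_uminus)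
  have "max_points (sphere 0 r) (\<lambda>M. -1 * Hn h lam M) = (diag_points r :: (real^'n) set)"
    by (intro max_points_Hn_diag_points r h reg) (simp add: sign)
  thus "min_points (sphere 0 r) (Hn h lam) = (diag_points r :: (real^'n) set)" by (simp add: max_points_uminus)
qed

lemma Hn_extrema_if_exponent_neg:
  fixes r h :: real
  assumes n2: "CARD('n) \<ge> 2" and r: "r > 0" and h: "h \<ge> 0" and lam: "lam < 0"
  defines "\<Gamma>' \<equiv> {M \<in> sphere (0::real^'n) r. \<forall>A\<in>cube_vertices. (dist M A)\<^sup>2 + h > 0}"
  shows "min_points \<Gamma>' (Hn h lam) = axis_points r"
    and "if h = 0 \<and> r = sqrt (real CARD('n)) / 2 then \<not> bdd_above (Hn h lam ` \<Gamma>')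
      else max_points (sphere 0 r) (Hn h lam) = (diag_points r :: (real^'n) set)"
proof -
  have sign: "falling4 (lam/2) > 0" using lam by (intro falling4_pos) simp
  have "X \<in> \<Gamma>'" if X: "X \<in> axis_points r" for X :: "real^'n"
  proof -
    obtain k where "X $ k = 0" using axis_point_zero_coord[OF n2 X] .
    thus ?thesis using dist_cube_vertices_pos_if_zero_coord[OF _ h] axis_points_subset_sphere[of r] r X
      unfolding \<Gamma>'_def by auto
  qed
  hence "min_points \<Gamma>' (\<lambda>M. 1 * Hn h lam M) = axis_points r"
    by (intro min_points_Hn_axis_points n2 r h) (auto simp: sign \<Gamma>'_def Hn_regular_def)
  thus "min_points \<Gamma>' (Hn h lam) = axis_points r" by simp
  show "if h = 0 \<and> r = sqrt (real CARD('n)) / 2 then \<not> bdd_above (Hn h lam ` \<Gamma>')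
      else max_points (sphere 0 r) (Hn h lam) = (diag_points r :: (real^'n) set)"
  proof (cases "h = 0 \<and> r = sqrt (real CARD('n)) / 2")
    case True thus ?thesis using Hn_unbounded_on_circumsphere[OF n2 lam] unfolding \<Gamma>'_def by simp
  next
    case False
    have "Hn_regular h lam N" if "N \<in> sphere (0::real^'n) r" for N
      using Hn_regular_on_sphere[OF h False that] .
    hence "max_points (sphere 0 r) (\<lambda>M. 1 * Hn h lam M) = (diag_points r :: (real^'n) set)"
      by (intro max_points_Hn_diag_points r h) (simp_all add: sign)
    thus ?thesis unfolding if_not_P[OF False] by simp
  qed
qed

theorem theorem6p3:
  fixes r h :: real
  assumes n2: "CARD('n) \<ge> 2"
    and r: "r > 0" and h: "h \<ge> 0"
  defines "\<Gamma> \<equiv> sphere (0::real^'n) r"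
    and "D \<equiv> diag_points r :: (real^'n) set"
    and "E \<equiv> axis_points r :: (real^'n) set"
    and "\<Gamma>' \<equiv> {M \<in> sphere (0::real^'n) r. \<forall>A\<in>cube_vertices. (dist M A)\<^sup>2 + h > 0}"
  shows
    "(\<forall>lam < 0.
        min_points \<Gamma>' (Hn h lam) = E \<and>
        (if h = 0 \<and> r = sqrt (real CARD('n)) / 2
         then \<not> bdd_above (Hn h lam ` \<Gamma>')
         else max_points \<Gamma> (Hn h lam) = D)) \<and>
     (\<forall>lam. (\<forall>M\<in>\<Gamma>. \<forall>N\<in>\<Gamma>. Hn h lam M = Hn h lam N) \<longleftrightarrow> lam \<in> {0, 2, 4, 6}) \<and>
     (\<forall>lam. (0 < lam \<and> lam < 2) \<or> (4 < lam \<and> lam < 6) \<longrightarrow>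
        max_points \<Gamma> (Hn h lam) = E \<and> min_points \<Gamma> (Hn h lam) = D) \<and>
     (\<forall>lam. 2 < lam \<and> lam < 4 \<longrightarrow>
        min_points \<Gamma> (Hn h lam) = E \<and> max_points \<Gamma> (Hn h lam) = D) \<and>
     (\<forall>lam > 6.
        max_points \<Gamma> (Hn h lam) = D \<and> min_points \<Gamma> (Hn h lam) = E)"
proof -
  have neg_exponent: "min_points \<Gamma>' (Hn h lam) = E \<and>
      (if h = 0 \<and> r = sqrt (real CARD('n)) / 2 then \<not> bdd_above (Hn h lam ` \<Gamma>')
       else max_points \<Gamma> (Hn h lam) = D)" if "lam < 0" for lam
    using Hn_extrema_if_exponent_neg[OF n2 r h that] unfolding \<Gamma>'_def \<Gamma>_def D_def E_def by blast
  have const_iff: "(\<forall>M\<in>\<Gamma>. \<forall>N\<in>\<Gamma>. Hn h lam M = Hn h lam N) \<longleftrightarrow> lam \<in> {0, 2, 4, 6}" for lam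
    using Hn_constant_on_sphere[OF n2 r h] Hn_nonconstant_on_sphere[OF n2 r h] unfolding \<Gamma>_def by blast
  have max_E_min_D: "max_points \<Gamma> (Hn h lam) = E \<and> min_points \<Gamma> (Hn h lam) = D"
    if "(0 < lam \<and> lam < 2) \<or> (4 < lam \<and> lam < 6)" for lam
  proof -
    have "falling4 (lam/2) < 0" using that by (intro falling4_neg) auto
    thus ?thesis using Hn_extrema_if_falling4_neg[OF n2 r h] that unfolding \<Gamma>_def D_def E_def by auto
  qed
  have min_E_max_D: "min_points \<Gamma> (Hn h lam) = E \<and> max_points \<Gamma> (Hn h lam) = D"
    if "(2 < lam \<and> lam < 4) \<or> 6 < lam" for lam
  proof -
    have "falling4 (lam/2) > 0" using that by (intro falling4_pos) auto
    thus ?thesis using Hn_extrema_if_falling4_pos[OF n2 r h] that unfolding \<Gamma>_def D_def E_def by auto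
  qed
  show ?thesis using neg_exponent const_iff max_E_min_D min_E_max_D by blast
qed

end
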